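(* Let $(X,\mu)$ be a standard probability space and let $T_1,\dots,T_n$ be measure-preserving Borel bijections of $(X,\mu)$ with pairwise disjoint supports. Suppose there are pairwise relatively prime integers $p_1,\dots,p_n\geq2$ such that for each $k\in\{1,\dots,n\}$, every $T_k$-orbit is finite and its cardinality divides a power of $p_k$. Then for every $k\in\{1,\dots,n\}$, $T_k$ belongs to the closure, for the uniform topology, of the group generated by $T_1T_2\cdots T_n$.
   Context: The support of $T$ is $\{x:T(x)\neq x\}$. The uniform topology on the group of measure-preserving bijections of $(X,\mu)$ (identified up to null sets) is given by the metric $d_u(T,U)=\mu(\{x:T(x)\neq U(x)\})$. *)

theory Defs
  imports "HOL-Probability.Probability"
begin

definition supp_map :: "('a \<Rightarrow> 'a) \<Rightarrow> 'a set" where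
  "supp_map T = {x. T x \<noteq> x}"

definition ipow :: "('a \<Rightarrow> 'a) \<Rightarrow> int \<Rightarrow> 'a \<Rightarrow> 'a" where
  "ipow T m = (if 0 \<le> m then T ^^ nat m else inv T ^^ nat (- m))"

definition orbit_of :: "('a \<Rightarrow> 'a) \<Rightarrow> 'a \<Rightarrow> 'a set" where
  "orbit_of T x = {ipow T m x | m. True}"

definition mp_borel_bij :: "'a measure \<Rightarrow> ('a \<Rightarrow> 'a) \<Rightarrow> bool" where
  "mp_borel_bij M T \<longleftrightarrow> bij T \<and> T \<in> measurable M M \<and> inv T \<in> measurable M M
     \<and> distr M M T = M"

definition unif_dist :: "'a measure \<Rightarrow> ('a \<Rightarrow> 'a) \<Rightarrow> ('a \<Rightarrow> 'a) \<Rightarrow> real" where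
  "unif_dist M T U = measure M {x \<in> space M. T x \<noteq> U x}"

text \<open>The product T_1 T_2 ... T_n (composition, T_n applied first).\<close>
definition comp_prod :: "(nat \<Rightarrow> 'a \<Rightarrow> 'a) \<Rightarrow> nat \<Rightarrow> 'a \<Rightarrow> 'a" where
  "comp_prod T n = foldr (\<circ>) (map T [1..<Suc n]) id"

end

theory Submission
  imports Defs "HOL-Combinatorics.Orbits" "HOL-Number_Theory.Cong"
begin

text \<open>
  Write \<open>S = T\<^sub>1 \<cdots> T\<^sub>n\<close>. Since the supports are disjoint and invariant, a point \<open>x\<close> is
  moved by at most one \<open>T\<^sub>j\<close>, and then \<open>S\<^sup>m x = T\<^sub>j\<^sup>m x\<close>. Once the \<open>T\<^sub>j\<close>-orbit of \<open>x\<close>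
  has size dividing \<open>p\<^sub>j\<^sup>N\<close> for every \<open>j\<close>, any \<open>m\<close> with \<open>m \<equiv> 1 (mod p\<^sub>k\<^sup>N)\<close> and
  \<open>m \<equiv> 0 (mod p\<^sub>j\<^sup>N)\<close> for \<open>j \<noteq> k\<close> (Chinese remainder theorem) gives \<open>S\<^sup>m x = T\<^sub>k x\<close>.
  Every \<open>x\<close> has this property for all large \<open>N\<close>, so the corresponding powers of \<open>S\<close>
  eventually agree with \<open>T\<^sub>k\<close> at every point, and in a finite measure space this forces
  their uniform distance to \<open>T\<^sub>k\<close> to tend to \<open>0\<close>.
\<close>

lemma ipow_of_nat [simp]: "ipow T (int n) = T ^^ n"
  by (simp add: ipow_def)

lemma orbit_of_eq_orbit:
  assumes bij: "bij T" and fin: "finite (orbit_of T x)"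
  shows "orbit_of T x = orbit T x"
proof -
  have forward: "{y. \<exists>n. y = (T ^^ n) x} \<subseteq> orbit_of T x"
    unfolding orbit_of_def by (auto intro: exI[of _ "int n" for n])
  obtain r where "r > 0" "(T ^^ r) x = x"
    using funpow_inj_finite[OF bij_is_inj[OF bij] finite_subset[OF forward fin]] by blast
  then have self: "x \<in> orbit T x"
    by (force simp: orbit_altdef)
  then have orbit_eq: "orbit T x = {(T ^^ n) x | n. True}"
    by (rule orbit_altdef_self_in)
  have "T ` orbit T x = orbit T x"
    using bij_is_inj[OF bij] finite_orbit[OF self]
    by (intro endo_inj_surj) (auto intro: orbit.step inj_on_subset)
  then have inv_closed: "inv T y \<in> orbit T x" if "y \<in> orbit T x" for y
    using that bij_is_inj[OF bij] by (metis imageE inv_f_f)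
  have backward: "(inv T ^^ k) x \<in> orbit T x" for k
    by (induction k) (simp_all add: self inv_closed)
  show ?thesis
  proof
    show "orbit_of T x \<subseteq> orbit T x"
      using backward unfolding orbit_of_def ipow_def orbit_eq by auto
    show "orbit T x \<subseteq> orbit_of T x"
      using forward unfolding orbit_eq by auto
  qed
qed

lemma funpow_card_orbit_of:
  assumes "bij T" "finite (orbit_of T x)"
  shows "(T ^^ card (orbit_of T x)) x = x"
proof -
  have "x \<in> orbit_of T x"
    unfolding orbit_of_def by (force simp: ipow_def)
  then have self: "x \<in> orbit T x"
    using orbit_of_eq_orbit[OF assms] by simp
  have "card (orbit T x) = funpow_dist1 T x x"
    using card_image[OF inj_on_funpow_dist1[OF self]] orbit_conv_funpow_dist1[OF self] by simp
  then show ?thesis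
    using funpow_dist1_prop[OF self] orbit_of_eq_orbit[OF assms] by simp
qed

lemma funpow_cong_card_orbit_of:
  assumes "bij T" "finite (orbit_of T x)" "[m = m'] (mod card (orbit_of T x))"
  shows "(T ^^ m) x = (T ^^ m') x"
  using funpow_mod_eq[OF funpow_card_orbit_of[OF assms(1,2)]] assms(3)
  by (metis cong_def)

definition fixed_except :: "(nat \<Rightarrow> 'a \<Rightarrow> 'a) \<Rightarrow> nat \<Rightarrow> nat \<Rightarrow> 'a set" where
  "fixed_except T n j = {x. \<forall>i \<in> {1..n} - {j}. T i x = x}"

lemma fixed_except_closed:
  assumes inj: "inj (T j)"
    and disj: "\<And>i. i \<in> {1..n} \<Longrightarrow> i \<noteq> j \<Longrightarrow> supp_map (T i) \<inter> supp_map (T j) = {}"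
    and x: "x \<in> fixed_except T n j"
  shows "T j x \<in> fixed_except T n j"
proof (cases "T j x = x")
  case False
  then have "T j x \<in> supp_map (T j)"
    using injD[OF inj] unfolding supp_map_def by blast
  then show ?thesis
    using disj unfolding fixed_except_def supp_map_def by blast
qed (use x in simp)

lemma ex_fixed_except:
  assumes disj: "\<And>i j. i \<in> {1..n} \<Longrightarrow> j \<in> {1..n} \<Longrightarrow> i \<noteq> j \<Longrightarrow>
                  supp_map (T i) \<inter> supp_map (T j) = {}"
    and k: "k \<in> {1..n}"
  obtains j where "j \<in> {1..n}" "x \<in> fixed_except T n j"
proof (cases "\<exists>i \<in> {1..n}. T i x \<noteq> x")
  case True
  then obtain i where "i \<in> {1..n}" "x \<in> supp_map (T i)"
    unfolding supp_map_def by blast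
  then show ?thesis
    using that disj unfolding fixed_except_def supp_map_def by blast
next
  case False
  then show ?thesis
    using that k unfolding fixed_except_def by blast
qed

lemma comp_prod_0 [simp]: "comp_prod T 0 = id"
  by (simp add: comp_prod_def)

lemma foldr_comp_id: "foldr (\<circ>) fs g = foldr (\<circ>) fs id \<circ> g"
  by (induction fs) (simp_all add: comp_assoc)

lemma comp_prod_Suc: "comp_prod T (Suc n) = comp_prod T n \<circ> T (Suc n)"
  unfolding comp_prod_def
  by (simp del: upt_Suc add: upt_Suc_append foldr_comp_id[of _ "T (Suc n)"])

lemma comp_prod_fixpoint:
  assumes "\<And>i. i \<in> {1..n} \<Longrightarrow> T i x = x"
  shows "comp_prod T n x = x"
  using assms by (induction n) (simp_all add: comp_prod_Suc)

lemma comp_prod_apply_fixed_except: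
  assumes "j \<in> {1..n}" "x \<in> fixed_except T n j" "T j x \<in> fixed_except T n j"
  shows "comp_prod T n x = T j x"
  using assms
proof (induction n)
  case (Suc n)
  show ?case
  proof (cases "j = Suc n")
    case True
    then have "comp_prod T n (T j x) = T j x"
      using Suc.prems(3) by (intro comp_prod_fixpoint) (auto simp: fixed_except_def)
    then show ?thesis
      using True by (simp add: comp_prod_Suc)
  next
    case False
    then have "T (Suc n) x = x"
      using Suc.prems(2) by (auto simp: fixed_except_def)
    moreover have "comp_prod T n x = T j x"
      using False Suc.prems by (intro Suc.IH) (auto simp: fixed_except_def)
    ultimately show ?thesis
      by (simp add: comp_prod_Suc)
  qed
qed simp

lemma funpow_comp_prod_fixed_except:
  assumes inj: "inj (T j)"
    and disj: "\<And>i. i \<in> {1..n} \<Longrightarrow> i \<noteq> j \<Longrightarrow> supp_map (T i) \<inter> supp_map (T j) = {}"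
    and j: "j \<in> {1..n}" and x: "x \<in> fixed_except T n j"
  shows "(comp_prod T n ^^ m) x = (T j ^^ m) x"
proof -
  have closed: "(T j ^^ m) x \<in> fixed_except T n j" for m
    using fixed_except_closed[of T j n] inj disj by (induction m) (simp_all add: x)
  show ?thesis
  proof (induction m)
    case (Suc m)
    have "comp_prod T n ((T j ^^ m) x) = T j ((T j ^^ m) x)"
      using closed[of "Suc m"] by (intro comp_prod_apply_fixed_except[OF j closed]) simp
    with Suc show ?case
      by simp
  qed simp
qed

lemma comp_prod_measurable:
  assumes "\<And>k. k \<in> {1..n} \<Longrightarrow> T k \<in> M \<rightarrow>\<^sub>M M"
  shows "comp_prod T n \<in> M \<rightarrow>\<^sub>M M"
  using assms by (induction n) (auto simp: comp_prod_Suc intro: measurable_comp)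

lemma funpow_comp_prod_eq_component:
  assumes bij: "\<And>j. j \<in> {1..n} \<Longrightarrow> bij (T j)"
    and disj: "\<And>i j. i \<in> {1..n} \<Longrightarrow> j \<in> {1..n} \<Longrightarrow> i \<noteq> j \<Longrightarrow>
                 supp_map (T i) \<inter> supp_map (T j) = {}"
    and k: "k \<in> {1..n}"
    and fin: "\<And>j. j \<in> {1..n} \<Longrightarrow> finite (orbit_of (T j) x)"
    and orbit_dvd: "\<And>j. j \<in> {1..n} \<Longrightarrow> card (orbit_of (T j) x) dvd q j"
    and m_k: "[m = 1] (mod q k)"
    and m_j: "\<And>j. j \<in> {1..n} \<Longrightarrow> j \<noteq> k \<Longrightarrow> q j dvd m"
  shows "(comp_prod T n ^^ m) x = T k x"
proof -
  obtain j where j: "j \<in> {1..n}" and x: "x \<in> fixed_except T n j"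
    using ex_fixed_except[OF disj k] .
  have "(comp_prod T n ^^ m) x = (T j ^^ m) x"
    using bij_is_inj[OF bij[OF j]] disj j x by (intro funpow_comp_prod_fixed_except) auto
  also have "\<dots> = T k x"
  proof (cases "j = k")
    case True
    then have "[m = 1] (mod card (orbit_of (T j) x))"
      using cong_dvd_modulus_nat[OF m_k orbit_dvd[OF k]] by simp
    then show ?thesis
      using funpow_cong_card_orbit_of[OF bij[OF j] fin[OF j]] True by simp
  next
    case False
    then have "[m = 0] (mod card (orbit_of (T j) x))"
      using dvd_trans[OF orbit_dvd[OF j] m_j[OF j]] by (simp add: cong_0_iff)
    moreover have "T k x = x"
      using x k False by (simp add: fixed_except_def)
    ultimately show ?thesis
      using funpow_cong_card_orbit_of[OF bij[OF j] fin[OF j]] by simp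
  qed
  finally show ?thesis .
qed

lemma chinese_remainder_one_zero_nat:
  fixes q :: "'i \<Rightarrow> nat"
  assumes "finite A" "k \<in> A"
    and "\<And>i j. i \<in> A \<Longrightarrow> j \<in> A \<Longrightarrow> i \<noteq> j \<Longrightarrow> coprime (q i) (q j)"
  shows "\<exists>m. [m = 1] (mod q k) \<and> (\<forall>j \<in> A - {k}. q j dvd m)"
proof -
  obtain m where "\<forall>i \<in> A. [m = (if i = k then 1 else 0)] (mod q i)"
    using chinese_remainder_nat[of A q "\<lambda>i. if i = k then 1 else 0"] assms by blast
  then show ?thesis
    using assms(2) by (metis DiffE cong_0_iff insertI1)
qed

lemma (in finite_measure) tendsto_measure_zero_if_eventually_notin:
  assumes sets: "\<And>N. D N \<in> sets M"
    and eventually_notin: "\<And>x. \<forall>\<^sub>F N in sequentially. x \<notin> D N"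
  shows "(\<lambda>N. measure M (D N)) \<longlonglongrightarrow> 0"
proof -
  define F where "F N = (\<Union>i \<in> {N..}. D i)" for N
  have F_sets: "range F \<subseteq> sets M"
    unfolding F_def using sets by auto
  have "decseq F"
    unfolding F_def decseq_def by (meson UN_mono atLeast_subset_iff order_refl)
  moreover have "(\<Inter>N. F N) = {}"
  proof -
    have "\<exists>N. x \<notin> F N" for x
      using eventually_notin[of x] unfolding F_def eventually_sequentially by auto
    then show ?thesis
      by blast
  qed
  ultimately have lim: "(\<lambda>N. measure M (F N)) \<longlonglongrightarrow> 0"
    using finite_Lim_measure_decseq[OF F_sets] by simp
  have le: "measure M (D N) \<le> measure M (F N)" for N
    using F_sets by (intro finite_measure_mono) (auto simp: F_def)
  show ?thesis
    by (rule tendsto_sandwich[of "\<lambda>_. 0" _ _ "\<lambda>N. measure M (F N)"]) (simp_all add: le lim)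
qed

lemma unif_dist_tendsto_zero:
  fixes M :: "'a::{second_countable_topology, t2_space} measure"
  assumes "finite_measure M" "sets M = sets borel"
    and f: "f \<in> M \<rightarrow>\<^sub>M M" and g: "\<And>N. g N \<in> M \<rightarrow>\<^sub>M M"
    and eventually_eq: "\<And>x. \<forall>\<^sub>F N in sequentially. g N x = f x"
  shows "(\<lambda>N. unif_dist M f (g N)) \<longlonglongrightarrow> 0"
proof -
  interpret finite_measure M
    by fact
  have "{x \<in> space M. f x = g N x} \<in> sets M" for N
    using f g[of N] unfolding measurable_cong_sets[OF refl assms(2)]
    by (rule measurable_equality_set)
  then have "{x \<in> space M. f x \<noteq> g N x} \<in> sets M" for N
    by (auto dest: sets.compl_sets)
  moreover have "\<forall>\<^sub>F N in sequentially. x \<notin> {x \<in> space M. f x \<noteq> g N x}" for x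
    using eventually_eq[of x] by eventually_elim simp
  ultimately show ?thesis
    unfolding unif_dist_def by (rule tendsto_measure_zero_if_eventually_notin)
qed

lemma eventually_funpow_comp_prod_eq_component:
  assumes bij: "\<And>j. j \<in> {1..n} \<Longrightarrow> bij (T j)"
    and disj: "\<And>i j. i \<in> {1..n} \<Longrightarrow> j \<in> {1..n} \<Longrightarrow> i \<noteq> j \<Longrightarrow>
                 supp_map (T i) \<inter> supp_map (T j) = {}"
    and k: "k \<in> {1..n}"
    and orb: "\<And>j. j \<in> {1..n} \<Longrightarrow>
                finite (orbit_of (T j) x) \<and> (\<exists>e. card (orbit_of (T j) x) dvd p j ^ e)"
    and m_k: "\<And>N. [m N = 1] (mod p k ^ N)"
    and m_j: "\<And>N j. j \<in> {1..n} \<Longrightarrow> j \<noteq> k \<Longrightarrow> p j ^ N dvd m N"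
  shows "\<forall>\<^sub>F N in sequentially. (comp_prod T n ^^ m N) x = T k x"
proof -
  have "\<exists>e. \<forall>j \<in> {1..n}. card (orbit_of (T j) x) dvd p j ^ e j"
    using orb by (intro bchoice) blast
  then obtain e where e: "\<And>j. j \<in> {1..n} \<Longrightarrow> card (orbit_of (T j) x) dvd p j ^ e j"
    by blast
  have "(comp_prod T n ^^ m N) x = T k x" if N: "N \<ge> (\<Sum>j \<in> {1..n}. e j)" for N
  proof (rule funpow_comp_prod_eq_component[where q = "\<lambda>j. p j ^ N"])
    show "card (orbit_of (T j) x) dvd p j ^ N" if j: "j \<in> {1..n}" for j
    proof (rule dvd_trans[OF e[OF j] le_imp_power_dvd])
      show "e j \<le> N"
        using member_le_sum[of j "{1..n}" e] j N by simp
    qed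
  qed (use bij disj k orb m_k m_j in blast)+
  then show ?thesis
    unfolding eventually_sequentially by blast
qed

theorem corollary6p2:
  fixes M :: "'a :: polish_space measure"
    and T :: "nat \<Rightarrow> 'a \<Rightarrow> 'a"
    and p :: "nat \<Rightarrow> nat"
    and n :: nat
  assumes std: "prob_space M" "sets M = sets borel"
    and mp: "\<And>k. k \<in> {1..n} \<Longrightarrow> mp_borel_bij M (T k)"
    and disj: "\<And>i j. i \<in> {1..n} \<Longrightarrow> j \<in> {1..n} \<Longrightarrow> i \<noteq> j \<Longrightarrow>
                 supp_map (T i) \<inter> supp_map (T j) = {}"
    and p_ge: "\<And>k. k \<in> {1..n} \<Longrightarrow> p k \<ge> 2"
    and p_cop: "\<And>i j. i \<in> {1..n} \<Longrightarrow> j \<in> {1..n} \<Longrightarrow> i \<noteq> j \<Longrightarrow> coprime (p i) (p j)"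
    and orb: "\<And>k x. k \<in> {1..n} \<Longrightarrow>
                finite (orbit_of (T k) x) \<and> (\<exists>e::nat. card (orbit_of (T k) x) dvd p k ^ e)"
  shows "\<forall>k \<in> {1..n}. \<forall>\<epsilon>>0. \<exists>m::int. unif_dist M (T k) (ipow (comp_prod T n) m) < \<epsilon>"
proof (intro ballI allI impI)
  fix k and \<epsilon> :: real
  assume k: "k \<in> {1..n}" and \<epsilon>: "\<epsilon> > 0"
  have bij: "\<And>j. j \<in> {1..n} \<Longrightarrow> bij (T j)" and meas: "\<And>j. j \<in> {1..n} \<Longrightarrow> T j \<in> M \<rightarrow>\<^sub>M M"
    using mp unfolding mp_borel_bij_def by blast+
  have "\<exists>m. [m = 1] (mod p k ^ N) \<and> (\<forall>j \<in> {1..n} - {k}. p j ^ N dvd m)" for N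
    using k p_cop by (intro chinese_remainder_one_zero_nat) auto
  then obtain m where m_k: "\<And>N. [m N = 1] (mod p k ^ N)"
    and m_j: "\<And>N j. j \<in> {1..n} \<Longrightarrow> j \<noteq> k \<Longrightarrow> p j ^ N dvd m N"
    by (metis DiffI singletonD)
  have "(\<lambda>N. unif_dist M (T k) (comp_prod T n ^^ m N)) \<longlonglongrightarrow> 0"
  proof (rule unif_dist_tendsto_zero)
    show "finite_measure M"
      using std(1) by (simp add: prob_space_def)
    show "\<And>N. comp_prod T n ^^ m N \<in> M \<rightarrow>\<^sub>M M"
      by (intro measurable_compose_n comp_prod_measurable meas)
    show "\<forall>\<^sub>F N in sequentially. (comp_prod T n ^^ m N) x = T k x" for x
      using bij disj k orb m_k m_j by (rule eventually_funpow_comp_prod_eq_component)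
  qed (use std(2) meas[OF k] in auto)
  then have "\<forall>\<^sub>F N in sequentially. unif_dist M (T k) (comp_prod T n ^^ m N) < \<epsilon>"
    using \<epsilon> by (rule order_tendstoD(2))
  then obtain N where "unif_dist M (T k) (comp_prod T n ^^ m N) < \<epsilon>"
    by (meson eventually_sequentially order_refl)
  then show "\<exists>m::int. unif_dist M (T k) (ipow (comp_prod T n) m) < \<epsilon>"
    by (metis ipow_of_nat)
qed

end
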